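(* Assume the standing hypotheses (H). If $T\subseteq V(G)$ is a stable set with $|T|=3$, then \[\sum_{\{u,v\}\subseteq T,\ u\ne v}|L(u)\cap L(v)|\ \ge\ k.\] Consequently (Corollary 21), every part $A$ of $G$ with $|A|\ge3$ contains distinct $u,v$ with $|L(u)\cap L(v)|\ge k/3$.
   Context: A list assignment $L$ assigns to each vertex $v$ a set $L(v)$ of colors; an $L$-coloring is a proper coloring $f$ with $f(v)\in L(v)$ for all $v$; $\mathrm{ch}$ denotes choice number and $\chi$ chromatic number. A part of a complete multipartite graph is one of its maximal stable sets. Standing hypotheses (H): $k\ge1$ and $n\ge 2k+2$ are integers; $G$ is a complete $k$-partite graph (exactly $k$ nonempty parts) on $n$ vertices; $L$ is a list assignment for $G$ with $|L(v)|\ge\lceil (n+k-1)/3\rceil$ for every vertex $v$; $G$ has no $L$-coloring; $\left|\bigcup_{v\in V(G)}L(v)\right|\le n-1$; and every graph $H$ with fewer than $n$ vertices satisfies $\mathrm{ch}(H)\le\max\{\chi(H),\lceil(|V(H)|+\chi(H)-1)/3\rceil\}$. *)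

theory Defs
  imports Complex_Main
begin

definition graph :: "'v set \<Rightarrow> ('v \<times> 'v) set \<Rightarrow> bool" where
  "graph V E \<longleftrightarrow> finite V \<and> E \<subseteq> V \<times> V \<and> (\<forall>u v. (u,v) \<in> E \<longrightarrow> (v,u) \<in> E) \<and> (\<forall>v. (v,v) \<notin> E)"

definition proper_coloring :: "'v set \<Rightarrow> ('v \<times> 'v) set \<Rightarrow> ('v \<Rightarrow> 'c) \<Rightarrow> bool" where
  "proper_coloring V E f \<longleftrightarrow> (\<forall>(u,v)\<in>E. f u \<noteq> f v)"

definition L_coloring :: "'v set \<Rightarrow> ('v \<times> 'v) set \<Rightarrow> ('v \<Rightarrow> 'c set) \<Rightarrow> ('v \<Rightarrow> 'c) \<Rightarrow> bool" where
  "L_coloring V E L f \<longleftrightarrow> proper_coloring V E f \<and> (\<forall>v\<in>V. f v \<in> L v)"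

definition chromatic_number :: "'v set \<Rightarrow> ('v \<times> 'v) set \<Rightarrow> nat" where
  "chromatic_number V E = (LEAST m. \<exists>f :: 'v \<Rightarrow> nat. proper_coloring V E f \<and> f ` V \<subseteq> {..<m})"

text \<open>Choice number: least m such that every assignment of lists of size at least m is colourable
  (colours taken from nat, which is without loss of generality).\<close>
definition choice_number :: "'v set \<Rightarrow> ('v \<times> 'v) set \<Rightarrow> nat" where
  "choice_number V E = (LEAST m. \<forall>L :: 'v \<Rightarrow> nat set.
      (\<forall>v\<in>V. finite (L v) \<and> card (L v) \<ge> m) \<longrightarrow> (\<exists>f. L_coloring V E L f))"

definition stable :: "'v set \<Rightarrow> ('v \<times> 'v) set \<Rightarrow> 'v set \<Rightarrow> bool" where
  "stable V E S \<longleftrightarrow> S \<subseteq> V \<and> (\<forall>u\<in>S. \<forall>v\<in>S. (u,v) \<notin> E)"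

definition part :: "'v set \<Rightarrow> ('v \<times> 'v) set \<Rightarrow> 'v set \<Rightarrow> bool" where
  "part V E A \<longleftrightarrow> A \<noteq> {} \<and> stable V E A \<and> (\<forall>B. stable V E B \<and> A \<subseteq> B \<longrightarrow> B = A)"

definition complete_multipartite :: "'v set \<Rightarrow> ('v \<times> 'v) set \<Rightarrow> nat \<Rightarrow> bool" where
  "complete_multipartite V E k \<longleftrightarrow> graph V E \<and> (\<exists>P. card P = k \<and> finite P \<and> {} \<notin> P \<and> \<Union>P = V \<and>
      (\<forall>A\<in>P. \<forall>B\<in>P. A \<noteq> B \<longrightarrow> A \<inter> B = {}) \<and>
      (\<forall>u\<in>V. \<forall>v\<in>V. (u,v) \<in> E \<longleftrightarrow> \<not> (\<exists>A\<in>P. u \<in> A \<and> v \<in> A)))"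

end

theory Submission
  imports Defs
begin

text \<open>Only the sizes of the lists matter: three lists of size at least
  \<open>m = \<lceil>(n + k - 1) / 3\<rceil>\<close> drawn from at most \<open>n - 1\<close> colours must overlap, by
  inclusion-exclusion, in at least \<open>3m - (n - 1) \<ge> k\<close> colours counted pairwise.
  The corollary is the pigeonhole principle applied to the three pairs of a triple
  inside the part.\<close>

lemma card_Un3_Int_pairs:
  assumes "finite A" "finite B" "finite C"
  shows "card A + card B + card C
    \<le> card (A \<union> B \<union> C) + card (A \<inter> B) + card (A \<inter> C) + card (B \<inter> C)"
proof -
  have AB: "card A + card B = card (A \<union> B) + card (A \<inter> B)"
    using card_Un_Int assms by blast
  have ABC: "card (A \<union> B) + card C = card (A \<union> B \<union> C) + card ((A \<union> B) \<inter> C)"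
    using card_Un_Int assms by (meson finite_UnI)
  have "card ((A \<union> B) \<inter> C) \<le> card (A \<inter> C) + card (B \<inter> C)"
    by (metis Int_Un_distrib2 card_Un_le)
  then show ?thesis using AB ABC by linarith
qed

lemma pairwise_overlap_lower_bound:
  assumes "finite A" "finite B" "finite C"
    and "m \<le> card A" "m \<le> card B" "m \<le> card C"
    and "card (A \<union> B \<union> C) \<le> N"
  shows "3 * m \<le> N + card (A \<inter> B) + card (A \<inter> C) + card (B \<inter> C)"
  using card_Un3_Int_pairs[OF assms(1-3)] assms(4-7) by linarith

lemma two_subsets_of_triple:
  assumes "a \<noteq> b" "a \<noteq> c" "b \<noteq> c"
  shows "{S. S \<subseteq> {a, b, c} \<and> card S = 2} = {{a, b}, {a, c}, {b, c}}"
proof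
  show "{S. S \<subseteq> {a, b, c} \<and> card S = 2} \<subseteq> {{a, b}, {a, c}, {b, c}}"
    by (auto simp: card_2_iff)
  show "{{a, b}, {a, c}, {b, c}} \<subseteq> {S. S \<subseteq> {a, b, c} \<and> card S = 2}"
    using assms by auto
qed

lemma sum_two_subsets_of_triple:
  assumes "a \<noteq> b" "a \<noteq> c" "b \<noteq> c"
  shows "(\<Sum>S\<in>{S. S \<subseteq> {a, b, c} \<and> card S = 2}. f S) = f {a, b} + f {a, c} + f {b, c}"
proof -
  have "{a, b} \<noteq> {a, c}" "{a, b} \<noteq> {b, c}" "{a, c} \<noteq> {b, c}"
    using assms by (auto simp: doubleton_eq_iff)
  then show ?thesis by (simp add: two_subsets_of_triple[OF assms] add.assoc)
qed

lemma le_card_add_three_ceiling: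
  fixes n k :: nat
  shows "n + k \<le> 3 * nat \<lceil>(real n + real k - 1) / 3\<rceil> + 1"
proof -
  define m where "m = nat \<lceil>(real n + real k - 1) / 3\<rceil>"
  have "(real n + real k - 1) / 3 \<le> real m"
    unfolding m_def by linarith
  then have "real n + real k \<le> 3 * real m + 1"
    by (simp add: field_simps)
  then show ?thesis unfolding m_def[symmetric] by linarith
qed

context
  fixes V :: "'v set" and L :: "'v \<Rightarrow> 'c set" and k :: nat
  assumes triple_overlap: "\<And>a b c. a \<in> V \<Longrightarrow> b \<in> V \<Longrightarrow> c \<in> V \<Longrightarrow>
    k \<le> card (L a \<inter> L b) + card (L a \<inter> L c) + card (L b \<inter> L c)"
begin

lemma sum_pair_overlaps_ge:
  assumes "T \<subseteq> V" "card T = 3"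
  shows "k \<le> (\<Sum>S\<in>{S. S \<subseteq> T \<and> card S = 2}. card (\<Inter>v\<in>S. L v))"
proof -
  obtain a b c where abc: "T = {a, b, c}" "a \<noteq> b" "a \<noteq> c" "b \<noteq> c"
    using assms(2) by (auto simp: card_3_iff)
  then show ?thesis
    using assms(1) triple_overlap[of a b c] by (simp add: sum_two_subsets_of_triple)
qed

lemma exists_pair_overlap_ge_third:
  assumes "A \<subseteq> V" "3 \<le> card A"
  shows "\<exists>u\<in>A. \<exists>v\<in>A. u \<noteq> v \<and> real k / 3 \<le> real (card (L u \<inter> L v))"
proof -
  obtain T where "T \<subseteq> A" "card T = 3"
    using assms(2) obtain_subset_with_card_n by metis
  then obtain a b c where abc: "{a, b, c} \<subseteq> A" "a \<noteq> b" "a \<noteq> c" "b \<noteq> c"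
    by (auto simp: card_3_iff)
  then have "a \<in> V" "b \<in> V" "c \<in> V"
    using assms(1) by auto
  then have "k \<le> card (L a \<inter> L b) + card (L a \<inter> L c) + card (L b \<inter> L c)"
    by (rule triple_overlap)
  then have "real k / 3 \<le> real (card (L a \<inter> L b)) \<or> real k / 3 \<le> real (card (L a \<inter> L c))
      \<or> real k / 3 \<le> real (card (L b \<inter> L c))"
    by linarith
  then show ?thesis using abc by blast
qed

end

theorem lemma20:
  fixes V :: "'v set" and E :: "('v \<times> 'v) set" and L :: "'v \<Rightarrow> 'c set" and k n :: nat
  assumes "k \<ge> 1" and "n \<ge> 2 * k + 2"
    and "complete_multipartite V E k" and "card V = n"
    and "\<forall>v\<in>V. finite (L v) \<and> card (L v) \<ge> nat \<lceil>(real n + real k - 1) / 3\<rceil>"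
    and "\<not> (\<exists>f. L_coloring V E L f)"
    and "finite (\<Union>v\<in>V. L v)" and "card (\<Union>v\<in>V. L v) \<le> n - 1"
    and "\<forall>(VH :: nat set) EH. graph VH EH \<and> card VH < n \<longrightarrow>
           choice_number VH EH \<le> max (chromatic_number VH EH)
             (nat \<lceil>(real (card VH) + real (chromatic_number VH EH) - 1) / 3\<rceil>)"
  shows "(\<forall>T. stable V E T \<and> card T = 3 \<longrightarrow>
            (\<Sum>S\<in>{S. S \<subseteq> T \<and> card S = 2}. card (\<Inter>v\<in>S. L v)) \<ge> k)
       \<and> (\<forall>A. part V E A \<and> card A \<ge> 3 \<longrightarrow>
            (\<exists>u\<in>A. \<exists>v\<in>A. u \<noteq> v \<and> real (card (L u \<inter> L v)) \<ge> real k / 3))"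
proof -
  have triple_overlap: "k \<le> card (L a \<inter> L b) + card (L a \<inter> L c) + card (L b \<inter> L c)"
    if "a \<in> V" "b \<in> V" "c \<in> V" for a b c
  proof -
    have "L a \<union> L b \<union> L c \<subseteq> (\<Union>v\<in>V. L v)"
      using that by auto
    then have "card (L a \<union> L b \<union> L c) \<le> n - 1"
      using card_mono[OF assms(7)] assms(8) by (meson le_trans)
    then have "3 * nat \<lceil>(real n + real k - 1) / 3\<rceil>
        \<le> n - 1 + card (L a \<inter> L b) + card (L a \<inter> L c) + card (L b \<inter> L c)"
      using assms(5) that by (intro pairwise_overlap_lower_bound) auto
    then show ?thesis
      using le_card_add_three_ceiling[of n k] assms(2) by linarith
  qed
  show ?thesis
  proof (intro conjI allI impI)
    fix T assume "stable V E T \<and> card T = 3"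
    then have "T \<subseteq> V" "card T = 3"
      unfolding stable_def by auto
    then show "k \<le> (\<Sum>S\<in>{S. S \<subseteq> T \<and> card S = 2}. card (\<Inter>v\<in>S. L v))"
      using sum_pair_overlaps_ge[where V = V and L = L and k = k, OF triple_overlap] by simp
  next
    fix A assume "part V E A \<and> 3 \<le> card A"
    then have "A \<subseteq> V" "3 \<le> card A"
      unfolding part_def stable_def by auto
    then show "\<exists>u\<in>A. \<exists>v\<in>A. u \<noteq> v \<and> real k / 3 \<le> real (card (L u \<inter> L v))"
      using exists_pair_overlap_ge_third[where V = V and L = L and k = k, OF triple_overlap] by simp
  qed
qed

end
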